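(* For any parent selection mechanism (applied to the set of points of maximum $\mathrm{L}$-value), the expected time for the modified GSEMO on \textsc{LOTZ} to reach the Pareto front (i.e. to have a Pareto-optimal point in its population) is $O(n^2)$.
   Context: Search space $\{0,1\}^n$; objectives maximised. $\textsc{LOTZ}(x)=(\mathrm{LO}(x),\mathrm{TZ}(x))$, $\mathrm{LO}$ = number of leading ones, $\mathrm{TZ}$ = number of trailing zeros. Dominance: $y$ dominates $x$ if $f_i(y)\ge f_i(x)$ for all $i$, strictly for some $i$; weakly dominates if $\ge$ in all. Pareto set $\{1^i0^{n-i}:0\le i\le n\}$. Modified GSEMO: let $\mathrm{L}(x)=\mathrm{LO}(x)+\mathrm{TZ}(x)$. Start with uniform random $s$, $P=\{s\}$. Each iteration: let $P'\subseteq P$ be the points with maximum $\mathrm{L}$-value; choose a parent $s\in P'$ by the parent selection mechanism (with any diversity scores computed w.r.t. $P'$); create $s'$ by flipping each bit independently with probability $1/n$; if $s'$ is not dominated by any member of $P$, add it and remove all members of $P$ weakly dominated by $s'$. Time = number of iterations. *)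

theory Defs
  imports "HOL-Probability.Probability"
begin

type_synonym bits = "bool list"

definition LO :: "bits \<Rightarrow> nat" where
  "LO x = length (takeWhile (\<lambda>b. b) x)"

definition TZ :: "bits \<Rightarrow> nat" where
  "TZ x = length (takeWhile (\<lambda>b. \<not> b) (rev x))"

definition Lval :: "bits \<Rightarrow> nat" where
  "Lval x = LO x + TZ x"

definition weakly_dominates :: "bits \<Rightarrow> bits \<Rightarrow> bool" where
  "weakly_dominates y x \<longleftrightarrow> LO y \<ge> LO x \<and> TZ y \<ge> TZ x"

definition dominates :: "bits \<Rightarrow> bits \<Rightarrow> bool" where
  "dominates y x \<longleftrightarrow> weakly_dominates y x \<and> (LO y > LO x \<or> TZ y > TZ x)"

definition pareto_optimal :: "nat \<Rightarrow> bits \<Rightarrow> bool" where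
  "pareto_optimal n x \<longleftrightarrow> length x = n \<and> \<not> (\<exists>y. length y = n \<and> dominates y x)"

fun mutate :: "real \<Rightarrow> bits \<Rightarrow> bits pmf" where
  "mutate p [] = return_pmf []"
| "mutate p (b # bs) =
     bind_pmf (bernoulli_pmf p) (\<lambda>f. bind_pmf (mutate p bs) (\<lambda>r. return_pmf ((if f then \<not> b else b) # r)))"

definition valid_selection :: "(bits set \<Rightarrow> bits pmf) \<Rightarrow> bool" where
  "valid_selection sel \<longleftrightarrow> (\<forall>Q. finite Q \<and> Q \<noteq> {} \<longrightarrow> set_pmf (sel Q) \<subseteq> Q)"

definition max_L_points :: "bits set \<Rightarrow> bits set" where
  "max_L_points P = {x \<in> P. Lval x = Max (Lval ` P)}"

definition update_pop :: "bits set \<Rightarrow> bits \<Rightarrow> bits set" where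
  "update_pop P s' =
     (if \<exists>y\<in>P. dominates y s' then P
      else insert s' {y \<in> P. \<not> weakly_dominates s' y})"

text \<open>One iteration of the modified GSEMO; made absorbing once the population
  contains a Pareto-optimal point (so that the probability of not being absorbed
  after t steps is the probability that the hitting time exceeds t).\<close>
definition gsemo_step :: "nat \<Rightarrow> (bits set \<Rightarrow> bits pmf) \<Rightarrow> bits set \<Rightarrow> bits set pmf" where
  "gsemo_step n sel P =
     (if \<exists>x\<in>P. pareto_optimal n x then return_pmf P
      else bind_pmf (sel (max_L_points P))
             (\<lambda>s. map_pmf (update_pop P) (mutate (1 / real n) s)))"

definition init_pop :: "nat \<Rightarrow> bits set pmf" where
  "init_pop n = map_pmf (\<lambda>s. {s}) (pmf_of_set {x. length x = n})"

fun pop_dist :: "nat \<Rightarrow> (bits set \<Rightarrow> bits pmf) \<Rightarrow> nat \<Rightarrow> bits set pmf" where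
  "pop_dist n sel 0 = init_pop n"
| "pop_dist n sel (Suc t) = bind_pmf (pop_dist n sel t) (gsemo_step n sel)"

text \<open>Expected hitting time E[T] = sum over t of Pr[T > t].\<close>
definition expected_time :: "nat \<Rightarrow> (bits set \<Rightarrow> bits pmf) \<Rightarrow> ennreal" where
  "expected_time n sel =
     (\<Sum>t. ennreal (measure_pmf.prob (pop_dist n sel t) {P. \<not> (\<exists>x\<in>P. pareto_optimal n x)}))"

end

theory Submission
  imports Defs
begin

text \<open>Let \<open>k\<close> be the largest L-value in the population. It never decreases: a point is removed
  only by a new point weakly dominating it, whose L-value is then at least as large. While no
  Pareto-optimal point is present we have \<open>k < n\<close>, and whichever parent the selection picks has
  L-value \<open>k\<close>; mutating it by flipping exactly its first zero bit (at position LO) and nothing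
  else raises its L-value above \<open>k\<close>. That happens with probability
  \<open>(1/n)(1 - 1/n)^(n-1) \<ge> 1/(3n)\<close>, so each of the at most \<open>n\<close> values of \<open>k\<close> is left after
  \<open>3n\<close> expected iterations. Formally this is an additive drift argument with potential
  \<open>3n(n - k)\<close>, which drops by at least one in expectation per iteration before absorption.\<close>

lemma LO_Cons [simp]: "LO (b # x) = (if b then Suc (LO x) else 0)"
  by (simp add: LO_def)

lemma LO_le_length: "LO x \<le> length x"
  by (simp add: LO_def length_takeWhile_le)

lemma nth_less_LO: "i < LO x \<Longrightarrow> x ! i"
  unfolding LO_def by (metis nth_mem set_takeWhileD takeWhile_nth)

lemma not_nth_LO: "LO x < length x \<Longrightarrow> \<not> x ! LO x"
  unfolding LO_def using nth_length_takeWhile by blast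

lemma TZ_eq_LO_rev: "TZ x = LO (map Not (rev x))"
  by (simp add: TZ_def LO_def takeWhile_map comp_def)

lemma TZ_le_length: "TZ x \<le> length x"
  using LO_le_length[of "map Not (rev x)"] by (simp add: TZ_eq_LO_rev)

lemma not_nth_ge_TZ:
  assumes "length x - TZ x \<le> j" "j < length x"
  shows "\<not> x ! j"
proof -
  have "length x - Suc j < LO (map Not (rev x))"
    using assms TZ_le_length[of x] by (simp add: TZ_eq_LO_rev)
  then show ?thesis
    using nth_less_LO assms(2) by (fastforce simp: rev_nth Suc_diff_Suc)
qed

lemma Lval_le_length: "Lval x \<le> length x"
proof (rule ccontr)
  assume "\<not> Lval x \<le> length x"
  then have "length x < LO x + TZ x"
    by (simp add: Lval_def)
  then have "length x - TZ x < LO x \<and> length x - TZ x < length x"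
    using LO_le_length[of x] TZ_le_length[of x] by arith
  then show False
    using nth_less_LO not_nth_ge_TZ by blast
qed

lemma LO_list_update_LO: "LO x < length x \<Longrightarrow> LO x < LO (x[LO x := True])"
  by (induction x) auto

lemma LO_list_update_ge: "LO x \<le> i \<Longrightarrow> LO x \<le> LO (x[i := b])"
  by (induction x arbitrary: i) (auto split: nat.split)

lemma TZ_list_update_ge: "i + TZ x < length x \<Longrightarrow> TZ x \<le> TZ (x[i := b])"
  using LO_list_update_ge[of "map Not (rev x)" "length x - Suc i"]
  by (simp add: TZ_eq_LO_rev rev_update map_update)

lemma Lval_list_update_LO:
  assumes "Lval x < length x"
  shows "Lval x < Lval (x[LO x := True])"
proof -
  have "LO x < LO (x[LO x := True])"
    using assms by (intro LO_list_update_LO) (simp add: Lval_def)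
  moreover have "TZ x \<le> TZ (x[LO x := True])"
    using assms by (intro TZ_list_update_ge) (simp add: Lval_def)
  ultimately show ?thesis
    by (simp add: Lval_def)
qed

lemma pareto_optimal_if_Lval_eq:
  assumes "length x = n" "Lval x = n"
  shows "pareto_optimal n x"
proof -
  have "\<not> dominates y x" if "length y = n" for y
    using Lval_le_length[of y] that assms
    by (auto simp: dominates_def weakly_dominates_def Lval_def)
  then show ?thesis
    using assms(1) by (auto simp: pareto_optimal_def)
qed

lemma length_mutate: "ys \<in> set_pmf (mutate p xs) \<Longrightarrow> length ys = length xs"
  by (induction p xs arbitrary: ys rule: mutate.induct) auto

lemma pmf_mutate:
  assumes "0 \<le> p" "p \<le> 1"
  shows "pmf (mutate p xs) ys =
    (if length ys = length xs
     then prod_list (map2 (\<lambda>a b. if a = b then 1 - p else p) xs ys) else 0)"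
proof (induction xs arbitrary: ys)
  case Nil
  then show ?case
    by (simp add: pmf_return)
next
  case (Cons b bs)
  have "mutate p (b # bs) = bernoulli_pmf p \<bind> (\<lambda>f. map_pmf ((#) (if f then \<not> b else b)) (mutate p bs))"
    by (simp add: map_pmf_def)
  moreover have "pmf (map_pmf ((#) c) M) y = (case y of [] \<Rightarrow> 0 | z # zs \<Rightarrow> if c = z then pmf M zs else 0)"
    for c :: bool and M y
    by (cases y) (auto simp: pmf_map vimage_def measure_pmf_single)
  ultimately show ?case
    using assms Cons.IH by (cases ys) (auto simp: pmf_bind)
qed

lemma prod_list_map2_flip:
  fixes q r :: "'a :: comm_monoid_mult"
  shows "j < length xs \<Longrightarrow>
   prod_list (map2 (\<lambda>a b. if a = b then q else r) xs (xs[j := \<not> xs ! j])) = r * q ^ (length xs - 1)"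
proof (induction xs arbitrary: j)
  case Nil
  then show ?case by simp
next
  case (Cons y xs)
  have same: "prod_list (map2 (\<lambda>a b. if a = b then q else r) xs xs) = q ^ length xs"
    by (induction xs) auto
  show ?case
  proof (cases j)
    case 0
    then show ?thesis using same by simp
  next
    case (Suc i)
    then have "i < length xs" using Cons.prems by simp
    then show ?thesis
      using Cons.IH Suc by (cases "length xs") (auto simp: mult_ac)
  qed
qed

lemma pmf_mutate_flip:
  assumes "0 \<le> p" "p \<le> 1" "j < length xs"
  shows "pmf (mutate p xs) (xs[j := \<not> xs ! j]) = p * (1 - p) ^ (length xs - 1)"
  using pmf_mutate[OF assms(1,2)] prod_list_map2_flip[OF assms(3)] by simp

lemma one_minus_inverse_power_ge:
  assumes "1 \<le> n"
  shows "1 / 3 \<le> (1 - 1 / real n) ^ (n - 1)"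
proof (cases "n = 1")
  case True
  then show ?thesis by simp
next
  case False
  define m where "m = n - 1"
  have m: "0 < m" "real n = real m + 1"
    using False assms by (auto simp: m_def)
  have "(1 + 1 / real m) ^ m \<le> exp (1 / real m) ^ m"
    by (intro power_mono) (auto simp: add.commute)
  also have "\<dots> = exp 1"
    using m by (simp flip: exp_of_nat_mult)
  also have "\<dots> \<le> 3"
    by (rule exp_le)
  finally have "1 / 3 \<le> 1 / (1 + 1 / real m) ^ m"
    by (intro divide_left_mono) (auto intro!: zero_less_power add_pos_nonneg)
  moreover have "(1 - 1 / real n) ^ m = 1 / (1 + 1 / real m) ^ m"
    using m by (simp add: field_simps power_divide)
  ultimately show ?thesis
    by (simp add: m_def)
qed

lemma pmf_mutate_flip_ge:
  assumes "1 \<le> n" "length x = n" "j < n"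
  shows "1 / (3 * real n) \<le> pmf (mutate (1 / real n) x) (x[j := \<not> x ! j])"
proof -
  have "1 / (3 * real n) = 1 / real n * (1 / 3)"
    by simp
  also have "\<dots> \<le> 1 / real n * (1 - 1 / real n) ^ (n - 1)"
    using one_minus_inverse_power_ge[OF assms(1)] by (intro mult_left_mono) simp_all
  also have "\<dots> = pmf (mutate (1 / real n) x) (x[j := \<not> x ! j])"
    using assms by (simp add: pmf_mutate_flip)
  finally show ?thesis .
qed

lemma fitness_level_drift:
  fixes f :: "'a \<Rightarrow> nat" and N :: "'a pmf"
  assumes "k < m" and "0 < c"
    and no_regress: "\<And>y. y \<in> set_pmf N \<Longrightarrow> k \<le> f y"
    and progress: "ennreal (1 / real c) \<le> emeasure (measure_pmf N) {y. k < f y}"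
  shows "(\<integral>\<^sup>+y. of_nat ((m - f y) * c) \<partial>N) + 1 \<le> of_nat ((m - k) * c)"
proof -
  let ?B = "{y. k < f y}"
  have pointwise: "of_nat ((m - f y) * c) + of_nat c * indicator ?B y \<le> (of_nat ((m - k) * c) :: ennreal)"
    if "y \<in> set_pmf N" for y
  proof -
    have "m - f y + (if k < f y then 1 else 0) \<le> m - k"
      using no_regress[OF that] \<open>k < m\<close> by auto
    then have "of_nat ((m - f y + (if k < f y then 1 else 0)) * c) \<le> (of_nat ((m - k) * c) :: ennreal)"
      by (intro of_nat_mono mult_right_mono) simp_all
    then show ?thesis
      by (simp add: add_mult_distrib split: if_splits)
  qed
  have "1 = of_nat c * ennreal (1 / real c)"
    using \<open>0 < c\<close> by (simp add: ennreal_of_nat_eq_real_of_nat flip: ennreal_mult)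
  also have "\<dots> \<le> of_nat c * emeasure (measure_pmf N) ?B"
    using progress by (rule mult_left_mono) simp
  finally have "(\<integral>\<^sup>+y. of_nat ((m - f y) * c) \<partial>N) + 1
      \<le> (\<integral>\<^sup>+y. of_nat ((m - f y) * c) \<partial>N) + of_nat c * emeasure (measure_pmf N) ?B"
    by (rule add_left_mono)
  also have "\<dots> = (\<integral>\<^sup>+y. of_nat ((m - f y) * c) + of_nat c * indicator ?B y \<partial>N)"
    by (simp add: nn_integral_add nn_integral_cmult)
  also have "\<dots> \<le> (\<integral>\<^sup>+y. of_nat ((m - k) * c) \<partial>N)"
    by (intro nn_integral_mono_AE AE_pmfI pointwise)
  also have "\<dots> = of_nat ((m - k) * c)"
    by (simp add: measure_pmf.emeasure_space_1)
  finally show ?thesis .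
qed

lemma additive_drift_suminf:
  fixes g :: "'a \<Rightarrow> ennreal" and M :: "nat \<Rightarrow> 'a pmf" and K :: "'a \<Rightarrow> 'a pmf"
  assumes step: "\<And>t. M (Suc t) = bind_pmf (M t) K"
    and drift: "\<And>t x. x \<in> set_pmf (M t) \<Longrightarrow> (\<integral>\<^sup>+y. g y \<partial>K x) + indicator A x \<le> g x"
  shows "(\<Sum>t. emeasure (measure_pmf (M t)) A) \<le> (\<integral>\<^sup>+x. g x \<partial>M 0)"
proof (rule suminf_le_const[OF summableI])
  have telescope: "(\<integral>\<^sup>+x. g x \<partial>M T) + (\<Sum>t<T. emeasure (measure_pmf (M t)) A) \<le> (\<integral>\<^sup>+x. g x \<partial>M 0)" for T
  proof (induction T)
    case 0
    then show ?case by simp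
  next
    case (Suc T)
    have "(\<integral>\<^sup>+x. g x \<partial>M (Suc T)) + (\<Sum>t<Suc T. emeasure (measure_pmf (M t)) A)
        = (\<integral>\<^sup>+x. (\<integral>\<^sup>+y. g y \<partial>K x) + indicator A x \<partial>M T) + (\<Sum>t<T. emeasure (measure_pmf (M t)) A)"
      by (simp add: step nn_integral_add add.assoc)
    also have "\<dots> \<le> (\<integral>\<^sup>+x. g x \<partial>M T) + (\<Sum>t<T. emeasure (measure_pmf (M t)) A)"
      by (intro add_right_mono nn_integral_mono_AE AE_pmfI drift)
    also have "\<dots> \<le> (\<integral>\<^sup>+x. g x \<partial>M 0)"
      by (rule Suc.IH)
    finally show ?case .
  qed
  show "(\<Sum>t<T. emeasure (measure_pmf (M t)) A) \<le> (\<integral>\<^sup>+x. g x \<partial>M 0)" for T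
    using telescope[of T] by (rule order_trans[rotated]) simp
qed

definition valid_pop :: "nat \<Rightarrow> bits set \<Rightarrow> bool" where
  "valid_pop n P \<longleftrightarrow> finite P \<and> P \<noteq> {} \<and> (\<forall>x\<in>P. length x = n)"

definition max_L :: "bits set \<Rightarrow> nat" where
  "max_L P = Max (Lval ` P)"

abbreviation found_pareto :: "nat \<Rightarrow> bits set \<Rightarrow> bool" where
  "found_pareto n P \<equiv> \<exists>x\<in>P. pareto_optimal n x"

lemma Lval_le_max_L: "finite P \<Longrightarrow> x \<in> P \<Longrightarrow> Lval x \<le> max_L P"
  by (simp add: max_L_def)

lemma max_L_in: "finite P \<Longrightarrow> P \<noteq> {} \<Longrightarrow> \<exists>x\<in>P. Lval x = max_L P"
  unfolding max_L_def by (metis (mono_tags) Max_in finite_imageI image_iff image_is_empty)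

lemma max_L_less:
  assumes "valid_pop n P" "\<not> found_pareto n P"
  shows "max_L P < n"
proof -
  obtain x where x: "x \<in> P" "Lval x = max_L P"
    using assms(1) max_L_in by (auto simp: valid_pop_def)
  have len: "length x = n"
    using assms(1) x(1) by (simp add: valid_pop_def)
  then have "Lval x \<noteq> n"
    using pareto_optimal_if_Lval_eq x(1) assms(2) by blast
  then show ?thesis
    using Lval_le_length[of x] len x(2) by simp
qed

lemma max_L_points_eq: "max_L_points P = {x \<in> P. Lval x = max_L P}"
  by (simp add: max_L_points_def max_L_def)

lemma selected_parent:
  assumes "valid_selection sel" "finite P" "P \<noteq> {}" "s \<in> set_pmf (sel (max_L_points P))"
  shows "s \<in> P" "Lval s = max_L P"
proof -
  have "max_L_points P \<noteq> {}"
    using max_L_in[OF assms(2,3)] by (auto simp: max_L_points_eq)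
  moreover have "finite (max_L_points P)"
    using assms(2) by (simp add: max_L_points_eq)
  ultimately have "s \<in> max_L_points P"
    using assms(1,4) unfolding valid_selection_def by blast
  then show "s \<in> P" "Lval s = max_L P"
    by (simp_all add: max_L_points_eq)
qed

lemma valid_pop_update_pop: "valid_pop n P \<Longrightarrow> length s = n \<Longrightarrow> valid_pop n (update_pop P s)"
  by (auto simp: valid_pop_def update_pop_def)

lemma max_L_update_pop_ge:
  assumes "valid_pop n P" "length s = n"
  shows "max_L P \<le> max_L (update_pop P s)"
proof -
  have fin: "finite (update_pop P s)"
    using valid_pop_update_pop[OF assms] by (simp add: valid_pop_def)
  obtain x where x: "x \<in> P" "Lval x = max_L P"
    using assms(1) max_L_in by (auto simp: valid_pop_def)
  have "\<exists>y\<in>update_pop P s. Lval x \<le> Lval y"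
  proof (cases "weakly_dominates s x \<and> \<not> (\<exists>y\<in>P. dominates y s)")
    case True
    then show ?thesis
      by (auto simp: update_pop_def weakly_dominates_def Lval_def)
  next
    case False
    then show ?thesis
      using x(1) by (auto simp: update_pop_def)
  qed
  then obtain y where "y \<in> update_pop P s" "Lval x \<le> Lval y"
    by blast
  then show ?thesis
    using x(2) Lval_le_max_L[OF fin, of y] by simp
qed

lemma max_L_update_pop_gt:
  assumes "valid_pop n P" "length s = n" "max_L P < Lval s"
  shows "max_L P < max_L (update_pop P s)"
proof -
  have "\<not> dominates y s" if "y \<in> P" for y
  proof -
    have "Lval y < Lval s"
      using assms(1,3) that Lval_le_max_L[of P y] by (simp add: valid_pop_def)
    then show ?thesis
      by (auto simp: dominates_def weakly_dominates_def Lval_def)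
  qed
  then have "s \<in> update_pop P s"
    by (auto simp: update_pop_def)
  moreover have "finite (update_pop P s)"
    using valid_pop_update_pop[OF assms(1,2)] by (simp add: valid_pop_def)
  ultimately show ?thesis
    using assms(3) Lval_le_max_L[of "update_pop P s" s] by simp
qed

lemma set_pmf_gsemo_step:
  assumes "valid_pop n P" "valid_selection sel" "P' \<in> set_pmf (gsemo_step n sel P)"
  shows "valid_pop n P' \<and> max_L P \<le> max_L P'"
proof (cases "found_pareto n P")
  case True
  then show ?thesis
    using assms by (simp add: gsemo_step_def)
next
  case False
  then obtain s s' where s: "s \<in> set_pmf (sel (max_L_points P))"
    and s': "s' \<in> set_pmf (mutate (1 / real n) s)" and P': "P' = update_pop P s'"
    using assms(3) by (auto simp: gsemo_step_def)
  have "s \<in> P"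
    using selected_parent(1)[OF assms(2) _ _ s] assms(1) by (simp add: valid_pop_def)
  then have len: "length s' = n"
    using assms(1) length_mutate[OF s'] by (simp add: valid_pop_def)
  show ?thesis
    unfolding P' using valid_pop_update_pop[OF assms(1) len] max_L_update_pop_ge[OF assms(1) len] by simp
qed

lemma set_pmf_init_pop:
  assumes "P \<in> set_pmf (init_pop n)"
  shows "\<exists>x. length x = n \<and> P = {x}"
proof -
  have fin: "finite {x :: bits. length x = n}"
    using finite_lists_length_eq[of "UNIV :: bool set" n] by simp
  have "replicate n True \<in> {x. length x = n}"
    by simp
  then have nonempty: "{x :: bits. length x = n} \<noteq> {}"
    by blast
  show ?thesis
    using assms set_pmf_of_set[OF nonempty fin] by (auto simp: init_pop_def)
qed

lemma valid_pop_pop_dist: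
  assumes "valid_selection sel" "P \<in> set_pmf (pop_dist n sel t)"
  shows "valid_pop n P"
  using assms(2)
proof (induction t arbitrary: P)
  case 0
  then show ?case
    using set_pmf_init_pop by (force simp: valid_pop_def)
next
  case (Suc t)
  then obtain P0 where P0: "P0 \<in> set_pmf (pop_dist n sel t)" and P: "P \<in> set_pmf (gsemo_step n sel P0)"
    by auto
  show ?case
    using set_pmf_gsemo_step[OF Suc.IH[OF P0] assms(1) P] by simp
qed

lemma mutate_improve_prob:
  assumes "1 \<le> n" "valid_pop n P" "\<not> found_pareto n P" "s \<in> P" "Lval s = max_L P"
  shows "ennreal (1 / (3 * real n))
    \<le> emeasure (measure_pmf (mutate (1 / real n) s)) {s'. max_L P < max_L (update_pop P s')}"
proof -
  let ?s' = "s[LO s := True]"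
  have len: "length s = n"
    using assms(2,4) by (simp add: valid_pop_def)
  have less: "Lval s < length s"
    using max_L_less[OF assms(2,3)] assms(5) len by simp
  then have LO_less: "LO s < n"
    using len by (simp add: Lval_def)
  have flip: "?s' = s[LO s := \<not> s ! LO s]"
    using not_nth_LO LO_less len by simp
  have "max_L P < max_L (update_pop P ?s')"
    using Lval_list_update_LO[OF less] assms(2,5) len by (intro max_L_update_pop_gt) auto
  then have "{?s'} \<subseteq> {s'. max_L P < max_L (update_pop P s')}"
    by simp
  then have "emeasure (measure_pmf (mutate (1 / real n) s)) {?s'}
      \<le> emeasure (measure_pmf (mutate (1 / real n) s)) {s'. max_L P < max_L (update_pop P s')}"
    by (rule emeasure_mono) simp
  moreover have "ennreal (1 / (3 * real n)) \<le> emeasure (measure_pmf (mutate (1 / real n) s)) {?s'}"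
    using pmf_mutate_flip_ge[OF assms(1) len LO_less] flip
    by (simp add: emeasure_pmf_single ennreal_leI)
  ultimately show ?thesis
    by (rule order_trans[rotated])
qed

lemma gsemo_step_improve_prob:
  assumes "1 \<le> n" "valid_pop n P" "\<not> found_pareto n P" "valid_selection sel"
  shows "ennreal (1 / (3 * real n)) \<le> emeasure (measure_pmf (gsemo_step n sel P)) {P'. max_L P < max_L P'}"
proof -
  let ?Q = "max_L_points P"
  have "ennreal (1 / (3 * real n)) = (\<integral>\<^sup>+s. ennreal (1 / (3 * real n)) \<partial>sel ?Q)"
    by (simp add: measure_pmf.emeasure_space_1)
  also have "\<dots> \<le> (\<integral>\<^sup>+s. emeasure (measure_pmf (mutate (1 / real n) s)) {s'. max_L P < max_L (update_pop P s')} \<partial>sel ?Q)"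
    using assms(2) selected_parent[OF assms(4)]
    by (intro nn_integral_mono_AE AE_pmfI mutate_improve_prob[OF assms(1-3)]) (auto simp: valid_pop_def)
  also have "\<dots> = emeasure (measure_pmf (gsemo_step n sel P)) {P'. max_L P < max_L P'}"
    using assms(3) by (simp add: gsemo_step_def vimage_def)
  finally show ?thesis .
qed

lemma gsemo_drift:
  assumes "1 \<le> n" "valid_pop n P" "valid_selection sel"
  shows "(\<integral>\<^sup>+P'. of_nat ((n - max_L P') * (3 * n)) \<partial>gsemo_step n sel P) + indicator {P. \<not> found_pareto n P} P
    \<le> of_nat ((n - max_L P) * (3 * n))"
proof (cases "found_pareto n P")
  case True
  then show ?thesis
    by (simp add: gsemo_step_def)
next
  case False
  have "(\<integral>\<^sup>+P'. of_nat ((n - max_L P') * (3 * n)) \<partial>gsemo_step n sel P) + 1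
      \<le> of_nat ((n - max_L P) * (3 * n))"
  proof (rule fitness_level_drift)
    show "max_L P < n" "0 < 3 * n"
      using max_L_less[OF assms(2) False] assms(1) by simp_all
    show "max_L P \<le> max_L P'" if "P' \<in> set_pmf (gsemo_step n sel P)" for P'
      using set_pmf_gsemo_step[OF assms(2,3) that] by simp
    show "ennreal (1 / real (3 * n)) \<le> emeasure (measure_pmf (gsemo_step n sel P)) {P'. max_L P < max_L P'}"
      using gsemo_step_improve_prob[OF assms(1,2) False assms(3)] by simp
  qed
  moreover have "indicator {P. \<not> found_pareto n P} P = (1 :: ennreal)"
    using False by simp
  ultimately show ?thesis
    by simp
qed

theorem lemma7:
  shows "\<exists>c::real. c > 0 \<and>
    (\<forall>n::nat. n \<ge> 1 \<longrightarrow> (\<forall>sel. valid_selection sel \<longrightarrow>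
        expected_time n sel \<le> ennreal (c * real n ^ 2)))"
proof (intro exI[of _ 3] conjI allI impI)
  fix n :: nat and sel
  assume n: "n \<ge> 1" and sel: "valid_selection sel"
  let ?g = "\<lambda>P. of_nat ((n - max_L P) * (3 * n)) :: ennreal"
  have "expected_time n sel = (\<Sum>t. emeasure (measure_pmf (pop_dist n sel t)) {P. \<not> found_pareto n P})"
    by (simp add: expected_time_def measure_pmf.emeasure_eq_measure)
  also have "\<dots> \<le> (\<integral>\<^sup>+P. ?g P \<partial>pop_dist n sel 0)"
    using gsemo_drift[OF n _ sel] valid_pop_pop_dist[OF sel]
    by (intro additive_drift_suminf[where K = "gsemo_step n sel"]) auto
  also have "\<dots> \<le> (\<integral>\<^sup>+P. of_nat (n * (3 * n)) \<partial>pop_dist n sel 0)"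
    by (intro nn_integral_mono of_nat_mono mult_right_mono) simp_all
  also have "\<dots> = ennreal (3 * real n ^ 2)"
    by (simp add: measure_pmf.emeasure_space_1 power2_eq_square ennreal_of_nat_eq_real_of_nat)
  finally show "expected_time n sel \<le> ennreal (3 * real n ^ 2)" .
qed simp

end
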